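(* Let $d\ge3$, $\alpha\in(0,1/2)$, $z\in(0,1)$, and for $\beta>0$ set $y=y(\beta)=-\beta^{-1}\log z$. Let $r_1,\dots,r_d$ be independent with distribution $\alpha\delta_{-1}+(1-2\alpha)\delta_0+\alpha\delta_1$, let $\rho_i(\sigma)=\frac{1+\sigma r_i}{2}$ for $\sigma=\pm1$, and $X_1=\sum_{\tau\in\{\pm1\}}\prod_{h=1}^d\left(1-(1-e^{-\beta})\rho_h(\tau)\right)$. Then \[\lim_{\beta\to\infty}\log\mathbb{E}[X_1^y]=\log(\zeta\mathcal{A}^d\xi),\] where $\mathcal{A}=(1-2\alpha)I+2\alpha\sqrt z\,\mathcal{M}$, $I$ is the $(d+1)\times(d+1)$ identity, $\zeta=(1,0,\dots,0)\in\mathbb{R}^{1\times(d+1)}$, $\xi=(1,z^{-1/2},z^{-1},\dots,z^{-d/2})^T\in\mathbb{R}^{(d+1)\times1}$, and $\mathcal{M}$ is the $(d+1)\times(d+1)$ matrix indexed by $0,\dots,d$ with $\mathcal{M}_{0,1}=\mathcal{M}_{d,d-1}=1$, $\mathcal{M}_{i,i-1}=\mathcal{M}_{i,i+1}=1/2$ for $1\le i\le d-1$, and all other entries $0$.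
   Context: $\delta_x$ denotes the point mass at $x$. *)

theory Defs
  imports "HOL-Probability.Probability" "Jordan_Normal_Form.Matrix"
begin

definition r_dist :: "real \<Rightarrow> real pmf" where
  "r_dist \<alpha> = pmf_of_list [(-1, \<alpha>), (0, 1 - 2 * \<alpha>), (1, \<alpha>)]"

definition rho :: "(nat \<Rightarrow> real) \<Rightarrow> nat \<Rightarrow> real \<Rightarrow> real" where
  "rho r i \<sigma> = (1 + \<sigma> * r i) / 2"

definition X1 :: "nat \<Rightarrow> real \<Rightarrow> (nat \<Rightarrow> real) \<Rightarrow> real" where
  "X1 d \<beta> r = (\<Sum>\<tau>\<in>{-1, 1::real}. \<Prod>h=1..d. (1 - (1 - exp (-\<beta>)) * rho r h \<tau>))"

definition M_mat :: "nat \<Rightarrow> real mat" where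
  "M_mat d = Matrix.mat (d+1) (d+1) (\<lambda>(i,j).
     if i = 0 then (if j = 1 then 1 else 0)
     else if i = d then (if j = d - 1 then 1 else 0)
     else if j = i - 1 \<or> j = i + 1 then 1/2 else 0)"

definition A_mat :: "nat \<Rightarrow> real \<Rightarrow> real \<Rightarrow> real mat" where
  "A_mat d \<alpha> z = (1 - 2 * \<alpha>) \<cdot>\<^sub>m 1\<^sub>m (d+1) + (2 * \<alpha> * sqrt z) \<cdot>\<^sub>m M_mat d"

definition zeta_vec :: "nat \<Rightarrow> real Matrix.vec" where
  "zeta_vec d = Matrix.vec (d+1) (\<lambda>i. if i = 0 then 1 else 0)"

definition xi_vec :: "nat \<Rightarrow> real \<Rightarrow> real Matrix.vec" where
  "xi_vec d z = Matrix.vec (d+1) (\<lambda>i. z powr (- real i / 2))"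

end

theory Submission
  imports Defs
begin

(* The r_h are the steps of a lazy random walk. Since r_h \<in> {-1, 0, 1}, every factor of X_1 is
   1, e = exp (-\<beta>) or (1 + e) / 2, so X_1 = ((1 + e) / 2)^#zeros * (e^#ups + e^#downs), and
   X_1^y(\<beta>) tends to z^min(#ups, #downs) for every outcome; the expectation is a finite sum,
   so it converges to E[z^min(#ups, #downs)] > 0, and ln passes to the limit.
   On the matrix side, row 0 of A^n is the distribution of the reflected walk |#ups - #downs|
   after n steps, in which every non-zero step carries a factor sqrt z; pairing with \<xi> turns
   sqrt z^(#ups + #downs) * z^(-|#ups - #downs| / 2) into z^min(#ups, #downs). *)

lemma expectation_finite_pmf:
  fixes f :: "'a \<Rightarrow> real"
  assumes "finite (set_pmf p)"
  shows "measure_pmf.expectation p f = (\<Sum>x\<in>set_pmf p. pmf p x * f x)"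
  by (subst integral_measure_pmf_real[OF assms]) (auto simp: mult.commute)

lemma expectation_pair_pmf_finite:
  fixes f :: "'a \<times> 'b \<Rightarrow> real"
  assumes "finite (set_pmf p)" "finite (set_pmf q)"
  shows "measure_pmf.expectation (pair_pmf p q) f =
         measure_pmf.expectation p (\<lambda>x. measure_pmf.expectation q (\<lambda>y. f (x, y)))"
proof -
  have "measure_pmf.expectation (pair_pmf p q) f =
        (\<Sum>(x, y)\<in>set_pmf p \<times> set_pmf q. pmf p x * (pmf q y * f (x, y)))"
    using assms by (auto simp: expectation_finite_pmf pmf_pair mult.assoc intro!: sum.cong)
  then show ?thesis
    using assms by (simp add: expectation_finite_pmf sum_distrib_left sum.cartesian_product)
qed

lemma finite_set_Pi_pmf:
  assumes "finite A" "\<And>x. x \<in> A \<Longrightarrow> finite (set_pmf (p x))"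
  shows "finite (set_pmf (Pi_pmf A dflt p))"
  using assms by (simp add: set_Pi_pmf finite_PiE_dflt)

lemma expectation_Pi_pmf_insert:
  fixes H :: "('a \<Rightarrow> 'b) \<Rightarrow> real"
  assumes "finite A" "i \<notin> A" "\<And>x. x \<in> insert i A \<Longrightarrow> finite (set_pmf (p x))"
  shows "measure_pmf.expectation (Pi_pmf (insert i A) dflt p) H =
         measure_pmf.expectation (p i) (\<lambda>y. measure_pmf.expectation (Pi_pmf A dflt p) (\<lambda>f. H (f(i := y))))"
  using assms
  by (simp add: Pi_pmf_insert expectation_pair_pmf_finite finite_set_Pi_pmf case_prod_beta)

lemma tendsto_expectation_finite_pmf:
  fixes f :: "'b \<Rightarrow> 'a \<Rightarrow> real"
  assumes "finite (set_pmf p)" "\<And>x. x \<in> set_pmf p \<Longrightarrow> ((\<lambda>t. f t x) \<longlongrightarrow> g x) F"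
  shows "((\<lambda>t. measure_pmf.expectation p (f t)) \<longlongrightarrow> measure_pmf.expectation p g) F"
  unfolding expectation_finite_pmf[OF assms(1)] by (intro tendsto_sum tendsto_mult tendsto_const assms(2))

lemma pmf_of_list_wf_r_dist:
  "0 \<le> (\<alpha>::real) \<Longrightarrow> \<alpha> \<le> 1/2 \<Longrightarrow> pmf_of_list_wf [(-1, \<alpha>), (0, 1 - 2 * \<alpha>), (1::real, \<alpha>)]"
  by (auto simp: pmf_of_list_wf_def)

lemma set_pmf_r_dist: "0 \<le> \<alpha> \<Longrightarrow> \<alpha> \<le> 1/2 \<Longrightarrow> set_pmf (r_dist \<alpha>) \<subseteq> {-1, 0, 1}"
  unfolding r_dist_def using set_pmf_of_list[OF pmf_of_list_wf_r_dist] by auto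

lemma finite_set_pmf_r_dist: "0 \<le> \<alpha> \<Longrightarrow> \<alpha> \<le> 1/2 \<Longrightarrow> finite (set_pmf (r_dist \<alpha>))"
  unfolding r_dist_def by (intro finite_set_pmf_of_list pmf_of_list_wf_r_dist)

lemma expectation_r_dist:
  assumes "0 \<le> \<alpha>" "\<alpha> \<le> 1/2"
  shows "measure_pmf.expectation (r_dist \<alpha>) G = \<alpha> * G (-1) + (1 - 2 * \<alpha>) * G 0 + \<alpha> * G 1"
proof -
  have "measure_pmf.expectation (r_dist \<alpha>) G = (\<Sum>x\<in>{-1, 0, 1}. G x * pmf (r_dist \<alpha>) x)"
    using set_pmf_r_dist[OF assms] by (intro integral_measure_pmf_real) auto
  then show ?thesis
    unfolding r_dist_def using pmf_pmf_of_list[OF pmf_of_list_wf_r_dist[OF assms]] by simp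
qed

abbreviation r_pmf :: "real \<Rightarrow> nat \<Rightarrow> (nat \<Rightarrow> real) pmf" where
  "r_pmf \<alpha> n \<equiv> Pi_pmf {1..n} 0 (\<lambda>_. r_dist \<alpha>)"

lemma integrable_Pi_pmf_r_dist:
  fixes f :: "_ \<Rightarrow> real"
  assumes "0 \<le> \<alpha>" "\<alpha> \<le> 1/2" "finite A"
  shows "integrable (measure_pmf (Pi_pmf A dflt (\<lambda>_. r_dist \<alpha>))) f"
  using assms by (intro integrable_measure_pmf_finite finite_set_Pi_pmf finite_set_pmf_r_dist)

lemma r_pmf_image:
  "0 \<le> \<alpha> \<Longrightarrow> \<alpha> \<le> 1/2 \<Longrightarrow> r \<in> set_pmf (r_pmf \<alpha> n) \<Longrightarrow> r ` {1..n} \<subseteq> {-1, 0, 1}"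
  using set_pmf_r_dist by (auto simp: set_Pi_pmf PiE_dflt_def)

lemma expectation_r_pmf_Suc:
  assumes "0 \<le> \<alpha>" "\<alpha> \<le> 1/2"
  shows "measure_pmf.expectation (r_pmf \<alpha> (Suc n)) H =
           \<alpha> * measure_pmf.expectation (r_pmf \<alpha> n) (\<lambda>f. H (f(Suc n := -1)))
         + (1 - 2 * \<alpha>) * measure_pmf.expectation (r_pmf \<alpha> n) (\<lambda>f. H (f(Suc n := 0)))
         + \<alpha> * measure_pmf.expectation (r_pmf \<alpha> n) (\<lambda>f. H (f(Suc n := 1)))"
proof -
  have ins: "{1..Suc n} = insert (Suc n) {1..n}" by auto
  show ?thesis
    unfolding ins using assms finite_set_pmf_r_dist[OF assms]
    by (simp add: expectation_Pi_pmf_insert expectation_r_dist)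
qed

definition up_steps :: "nat \<Rightarrow> (nat \<Rightarrow> real) \<Rightarrow> nat" where
  "up_steps n r = (\<Sum>h=1..n. of_bool (r h = 1))"

definition down_steps :: "nat \<Rightarrow> (nat \<Rightarrow> real) \<Rightarrow> nat" where
  "down_steps n r = (\<Sum>h=1..n. of_bool (r h = -1))"

lemma up_steps_fun_upd: "up_steps (Suc n) (r(Suc n := y)) = up_steps n r + of_bool (y = 1)"
  unfolding up_steps_def by (simp add: sum.cong)

lemma down_steps_fun_upd: "down_steps (Suc n) (r(Suc n := y)) = down_steps n r + of_bool (y = -1)"
  unfolding down_steps_def by (simp add: sum.cong)

lemma up_steps_add_down_steps_le: "up_steps n r + down_steps n r \<le> n"
proof -
  have "up_steps n r + down_steps n r = (\<Sum>h=1..n. of_bool (r h = 1) + of_bool (r h = -1))"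
    unfolding up_steps_def down_steps_def by (simp add: sum.distrib)
  also have "\<dots> \<le> (\<Sum>h=1..n. 1)"
    by (intro sum_mono) auto
  finally show ?thesis by simp
qed

lemma expectation_r_pmf_Suc_steps:
  assumes "0 \<le> \<alpha>" "\<alpha> \<le> 1/2"
  shows "measure_pmf.expectation (r_pmf \<alpha> (Suc n)) (\<lambda>r. F (up_steps (Suc n) r) (down_steps (Suc n) r)) =
           \<alpha> * measure_pmf.expectation (r_pmf \<alpha> n) (\<lambda>r. F (up_steps n r) (Suc (down_steps n r)))
         + (1 - 2 * \<alpha>) * measure_pmf.expectation (r_pmf \<alpha> n) (\<lambda>r. F (up_steps n r) (down_steps n r))
         + \<alpha> * measure_pmf.expectation (r_pmf \<alpha> n) (\<lambda>r. F (Suc (up_steps n r)) (down_steps n r))"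
  unfolding expectation_r_pmf_Suc[OF assms] by (simp add: up_steps_fun_upd down_steps_fun_upd)

(* Weight of the transition j - 1 \<rightarrow> j of the reflected walk: both neighbours of 0 fold onto 1. *)
definition fold_up_weight :: "nat \<Rightarrow> real" where
  "fold_up_weight j = (if j = 0 then 0 else if j = 1 then 2 else 1)"

lemma fold_indicator_Suc_nonneg:
  "of_bool (Suc k = j) + of_bool (nat \<bar>int k - 1\<bar> = j) =
   fold_up_weight j * of_bool (k = j - 1) + (of_bool (k = j + 1) :: real)"
  unfolding fold_up_weight_def by (cases k) auto

lemma fold_indicator_Suc:
  fixes D :: int
  shows "of_bool (nat \<bar>D + 1\<bar> = j) + of_bool (nat \<bar>D - 1\<bar> = j) =
         fold_up_weight j * of_bool (nat \<bar>D\<bar> = j - 1) + (of_bool (nat \<bar>D\<bar> = j + 1) :: real)"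
proof (cases "D \<ge> 0")
  case True
  then obtain k where "D = int k" using nonneg_int_cases by blast
  then have "nat \<bar>D + 1\<bar> = Suc k" "nat \<bar>D - 1\<bar> = nat \<bar>int k - 1\<bar>" "nat \<bar>D\<bar> = k"
    by auto
  then show ?thesis using fold_indicator_Suc_nonneg[of k j] by simp
next
  case False
  then have "D \<le> 0" by simp
  then obtain k where "D = - int k" by (rule nonpos_int_cases)
  then have "nat \<bar>D + 1\<bar> = nat \<bar>int k - 1\<bar>" "nat \<bar>D - 1\<bar> = Suc k" "nat \<bar>D\<bar> = k"
    by auto
  then show ?thesis using fold_indicator_Suc_nonneg[of k j] by simp
qed

definition fold_weight :: "real \<Rightarrow> nat \<Rightarrow> nat \<Rightarrow> nat \<Rightarrow> real" where
  "fold_weight z j a b = sqrt z ^ (a + b) * of_bool (nat \<bar>int a - int b\<bar> = j)"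

lemma fold_weight_Suc:
  "fold_weight z j (Suc a) b + fold_weight z j a (Suc b) =
   sqrt z * (fold_up_weight j * fold_weight z (j - 1) a b + fold_weight z (j + 1) a b)"
proof -
  define D where "D = int a - int b"
  have "int (Suc a) - int b = D + 1" "int a - int (Suc b) = D - 1"
    by (simp_all add: D_def)
  then show ?thesis
    using arg_cong[OF fold_indicator_Suc[of D j], of "\<lambda>x. sqrt z ^ Suc (a + b) * x"]
    unfolding fold_weight_def D_def by (simp add: algebra_simps)
qed

definition walk_weight :: "real \<Rightarrow> real \<Rightarrow> nat \<Rightarrow> nat \<Rightarrow> real" where
  "walk_weight \<alpha> z n j =
     measure_pmf.expectation (r_pmf \<alpha> n) (\<lambda>r. fold_weight z j (up_steps n r) (down_steps n r))"

lemma walk_weight_0: "walk_weight \<alpha> z 0 j = of_bool (j = 0)"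
  by (simp add: walk_weight_def fold_weight_def up_steps_def down_steps_def)

lemma walk_weight_Suc:
  assumes "0 \<le> \<alpha>" "\<alpha> \<le> 1/2"
  shows "walk_weight \<alpha> z (Suc n) j = (1 - 2 * \<alpha>) * walk_weight \<alpha> z n j
           + \<alpha> * sqrt z * (fold_up_weight j * walk_weight \<alpha> z n (j - 1) + walk_weight \<alpha> z n (j + 1))"
proof -
  let ?E = "measure_pmf.expectation (r_pmf \<alpha> n)"
  have E_add: "?E (\<lambda>r. f r + g r) = ?E f + ?E g" for f g :: "_ \<Rightarrow> real"
    by (intro Bochner_Integration.integral_add integrable_Pi_pmf_r_dist assms finite_atLeastAtMost)
  have "walk_weight \<alpha> z (Suc n) j = (1 - 2 * \<alpha>) * walk_weight \<alpha> z n j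
      + \<alpha> * ?E (\<lambda>r. fold_weight z j (Suc (up_steps n r)) (down_steps n r)
                   + fold_weight z j (up_steps n r) (Suc (down_steps n r)))"
    unfolding walk_weight_def expectation_r_pmf_Suc_steps[OF assms] E_add
    by (simp add: algebra_simps)
  also have "\<dots> = (1 - 2 * \<alpha>) * walk_weight \<alpha> z n j
      + \<alpha> * ?E (\<lambda>r. sqrt z * (fold_up_weight j * fold_weight z (j - 1) (up_steps n r) (down_steps n r)
                               + fold_weight z (j + 1) (up_steps n r) (down_steps n r)))"
    by (simp only: fold_weight_Suc)
  also have "\<dots> = (1 - 2 * \<alpha>) * walk_weight \<alpha> z n j
      + \<alpha> * sqrt z * (fold_up_weight j * walk_weight \<alpha> z n (j - 1) + walk_weight \<alpha> z n (j + 1))"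
    unfolding walk_weight_def integral_mult_right_zero E_add by (simp add: algebra_simps)
  finally show ?thesis .
qed

lemma walk_weight_eq_0: "0 \<le> \<alpha> \<Longrightarrow> \<alpha> \<le> 1/2 \<Longrightarrow> n < j \<Longrightarrow> walk_weight \<alpha> z n j = 0"
  by (induction n arbitrary: j) (simp_all add: walk_weight_0 walk_weight_Suc)

lemma M_mat_column_sum:
  fixes g :: "nat \<Rightarrow> real"
  assumes "g d = 0" "g (d + 1) = 0" "j \<le> d"
  shows "(\<Sum>k\<le>d. g k * M_mat d $$ (k, j)) = (fold_up_weight j * g (j - 1) + g (j + 1)) / 2"
proof -
  have "(\<Sum>k\<le>d. g k * M_mat d $$ (k, j)) =
        (\<Sum>k\<le>d. (if k = j - 1 then fold_up_weight j * g k / 2 else 0) + (if k = j + 1 then g k / 2 else 0))"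
    by (intro sum.cong refl) (use assms in \<open>auto simp: M_mat_def fold_up_weight_def le_Suc_eq\<close>)
  also have "\<dots> = fold_up_weight j * g (j - 1) / 2 + g (j + 1) / 2"
    using assms by (cases "j = d") (simp_all add: sum.distrib)
  also have "\<dots> = (fold_up_weight j * g (j - 1) + g (j + 1)) / 2"
    by (simp add: add_divide_distrib)
  finally show ?thesis .
qed

lemma A_mat_carrier: "A_mat d \<alpha> z \<in> carrier_mat (d+1) (d+1)"
  by (simp add: A_mat_def M_mat_def)

lemma A_mat_index:
  "k < d+1 \<Longrightarrow> j < d+1 \<Longrightarrow>
   A_mat d \<alpha> z $$ (k, j) = (1 - 2 * \<alpha>) * of_bool (k = j) + 2 * \<alpha> * sqrt z * M_mat d $$ (k, j)"
  by (simp add: A_mat_def M_mat_def)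

(* The boundary row d of M never matters: the walk cannot reach distance d before time d. *)
lemma A_mat_pow_row_0:
  assumes "0 \<le> \<alpha>" "\<alpha> \<le> 1/2"
  shows "n \<le> d \<Longrightarrow> j \<le> d \<Longrightarrow> (A_mat d \<alpha> z ^\<^sub>m n) $$ (0, j) = walk_weight \<alpha> z n j"
proof (induction n arbitrary: j)
  case 0
  then show ?case using A_mat_carrier[of d \<alpha> z] by (simp add: walk_weight_0)
next
  case (Suc n)
  let ?w = "walk_weight \<alpha> z n"
  have "(A_mat d \<alpha> z ^\<^sub>m Suc n) $$ (0, j) = (\<Sum>k\<le>d. ?w k * A_mat d \<alpha> z $$ (k, j))"
    using A_mat_carrier[of d \<alpha> z] Suc
    by (auto simp: scalar_prod_def atLeast0LessThan lessThan_Suc_atMost intro!: sum.cong)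
  also have "\<dots> = (\<Sum>k\<le>d. (if k = j then (1 - 2 * \<alpha>) * ?w k else 0)
                                + 2 * \<alpha> * sqrt z * (?w k * M_mat d $$ (k, j)))"
    using Suc.prems by (intro sum.cong refl) (simp add: A_mat_index algebra_simps)
  also have "\<dots> = (1 - 2 * \<alpha>) * ?w j + 2 * \<alpha> * sqrt z * (\<Sum>k\<le>d. ?w k * M_mat d $$ (k, j))"
    using Suc.prems by (simp add: sum.distrib sum_distrib_left)
  also have "\<dots> = walk_weight \<alpha> z (Suc n) j"
    using Suc.prems
    by (simp add: M_mat_column_sum walk_weight_eq_0[OF assms] walk_weight_Suc[OF assms])
  finally show ?case .
qed

lemma zeta_vec_scalar_prod_xi_vec:
  assumes "B \<in> carrier_mat (d+1) (d+1)"
  shows "zeta_vec d \<bullet> (B *\<^sub>v xi_vec d z) = (\<Sum>j\<le>d. B $$ (0, j) * z powr (- real j / 2))"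
proof -
  have "zeta_vec d \<bullet> (B *\<^sub>v xi_vec d z) = (\<Sum>i\<le>d. if i = 0 then (B *\<^sub>v xi_vec d z) $ i else 0)"
    using assms unfolding scalar_prod_def atLeast0LessThan lessThan_Suc_atMost
    by (intro sum.cong) (auto simp: zeta_vec_def)
  also have "\<dots> = Matrix.row B 0 \<bullet> xi_vec d z"
    using assms by simp
  also have "\<dots> = (\<Sum>j\<le>d. B $$ (0, j) * z powr (- real j / 2))"
    using assms unfolding scalar_prod_def atLeast0LessThan lessThan_Suc_atMost
    by (intro sum.cong) (auto simp: xi_vec_def)
  finally show ?thesis .
qed

lemma sqrt_power_mult_powr_dist:
  fixes z :: real
  assumes "0 < z"
  shows "sqrt z ^ (a + b) * z powr (- real (nat \<bar>int a - int b\<bar>) / 2) = z ^ min a b"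
proof -
  define N where "N = nat \<bar>int a - int b\<bar>"
  have "a + b = 2 * min a b + N"
    unfolding N_def by (cases "a \<le> b") auto
  then have "sqrt z ^ (a + b) = z ^ min a b * sqrt z ^ N"
    using assms by (simp add: power_add power_mult)
  moreover have "z powr (real N / 2) = sqrt z ^ N"
    using assms by (simp add: powr_half_sqrt[symmetric] powr_realpow[symmetric] powr_powr)
  ultimately show ?thesis
    using assms by (simp add: N_def[symmetric] powr_minus)
qed

lemma walk_weight_sum_eq_expectation:
  assumes "0 \<le> \<alpha>" "\<alpha> \<le> 1/2" "0 < z"
  shows "(\<Sum>j\<le>d. walk_weight \<alpha> z d j * z powr (- real j / 2)) =
         measure_pmf.expectation (r_pmf \<alpha> d) (\<lambda>r. z ^ min (up_steps d r) (down_steps d r))"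
proof -
  have "(\<Sum>j\<le>d. walk_weight \<alpha> z d j * z powr (- real j / 2)) =
        measure_pmf.expectation (r_pmf \<alpha> d)
          (\<lambda>r. \<Sum>j\<le>d. fold_weight z j (up_steps d r) (down_steps d r) * z powr (- real j / 2))"
    unfolding walk_weight_def
    by (subst Bochner_Integration.integral_sum)
       (auto intro!: integrable_Pi_pmf_r_dist assms)
  also have "\<dots> = measure_pmf.expectation (r_pmf \<alpha> d) (\<lambda>r. z ^ min (up_steps d r) (down_steps d r))"
  proof (intro Bochner_Integration.integral_cong refl)
    fix r
    let ?a = "up_steps d r" and ?b = "down_steps d r"
    let ?N = "nat \<bar>int ?a - int ?b\<bar>"
    have "?N \<le> d"
      using up_steps_add_down_steps_le[of d r] by linarith
    have "(\<Sum>j\<le>d. fold_weight z j ?a ?b * z powr (- real j / 2)) =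
          (\<Sum>j\<le>d. if j = ?N then sqrt z ^ (?a + ?b) * z powr (- real ?N / 2) else 0)"
      by (intro sum.cong) (auto simp: fold_weight_def)
    also have "\<dots> = z ^ min ?a ?b"
      using \<open>?N \<le> d\<close> sqrt_power_mult_powr_dist[OF assms(3), of ?a ?b] by simp
    finally show "(\<Sum>j\<le>d. fold_weight z j ?a ?b * z powr (- real j / 2)) = z ^ min ?a ?b" .
  qed
  finally show ?thesis .
qed

lemma zeta_vec_scalar_prod_A_mat_pow_xi_vec:
  assumes "0 \<le> \<alpha>" "\<alpha> \<le> 1/2" "0 < z"
  shows "zeta_vec d \<bullet> ((A_mat d \<alpha> z ^\<^sub>m d) *\<^sub>v xi_vec d z) =
         measure_pmf.expectation (r_pmf \<alpha> d) (\<lambda>r. z ^ min (up_steps d r) (down_steps d r))"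
proof -
  have "zeta_vec d \<bullet> ((A_mat d \<alpha> z ^\<^sub>m d) *\<^sub>v xi_vec d z) =
        (\<Sum>j\<le>d. (A_mat d \<alpha> z ^\<^sub>m d) $$ (0, j) * z powr (- real j / 2))"
    by (intro zeta_vec_scalar_prod_xi_vec pow_carrier_mat A_mat_carrier)
  also have "\<dots> = (\<Sum>j\<le>d. walk_weight \<alpha> z d j * z powr (- real j / 2))"
    by (intro sum.cong refl) (simp add: A_mat_pow_row_0[OF assms(1,2)])
  also have "\<dots> = measure_pmf.expectation (r_pmf \<alpha> d) (\<lambda>r. z ^ min (up_steps d r) (down_steps d r))"
    by (rule walk_weight_sum_eq_expectation[OF assms])
  finally show ?thesis .
qed

definition zero_steps :: "nat \<Rightarrow> (nat \<Rightarrow> real) \<Rightarrow> nat" where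
  "zero_steps n r = (\<Sum>h=1..n. of_bool (r h = 0))"

lemma X1_factor:
  fixes e \<tau> x :: real
  assumes "\<tau> \<in> {-1, 1}" "x \<in> {-1, 0, 1}"
  shows "1 - (1 - e) * ((1 + \<tau> * x) / 2) = ((1 + e) / 2) ^ of_bool (x = 0) * e ^ of_bool (x = \<tau>)"
  using assms by (elim insertE emptyE) (simp_all add: field_simps)

lemma X1_eq:
  assumes "r ` {1..d} \<subseteq> {-1, 0, 1}"
  shows "X1 d \<beta> r = ((1 + exp (-\<beta>)) / 2) ^ zero_steps d r * (exp (-\<beta>) ^ up_steps d r + exp (-\<beta>) ^ down_steps d r)"
proof -
  have prod: "(\<Prod>h=1..d. 1 - (1 - exp (-\<beta>)) * rho r h \<tau>) =
              ((1 + exp (-\<beta>)) / 2) ^ zero_steps d r * exp (-\<beta>) ^ (\<Sum>h=1..d. of_bool (r h = \<tau>))"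
    if "\<tau> \<in> {-1, 1}" for \<tau>
    unfolding rho_def zero_steps_def power_sum prod.distrib[symmetric]
    using that assms by (intro prod.cong refl X1_factor) (auto simp: image_subset_iff)
  show ?thesis
    using prod[of 1] prod[of "-1"]
    by (simp add: X1_def up_steps_def down_steps_def algebra_simps)
qed

lemma power_add_power_eq_power_min_mult:
  fixes x :: "'a :: comm_semiring_1"
  shows "x ^ a + x ^ b = x ^ min a b * (x ^ (a - min a b) + x ^ (b - min a b))"
  by (simp add: distrib_left flip: power_add)

lemma tendsto_exp_neg_power_mult_powr:
  fixes z :: real
  assumes "0 < z" "(g \<longlongrightarrow> G) at_top" "0 < G"
  shows "((\<lambda>\<beta>. (exp (-\<beta>) ^ k * g \<beta>) powr (- ln z / \<beta>)) \<longlongrightarrow> z ^ k) at_top"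
proof -
  have "\<forall>\<^sub>F \<beta> in at_top.
          exp (real k * ln z - ln z * (ln (g \<beta>) / \<beta>)) = (exp (-\<beta>) ^ k * g \<beta>) powr (- ln z / \<beta>)"
    using order_tendstoD(1)[OF assms(2,3)] eventually_gt_at_top[of 0]
  proof eventually_elim
    case (elim \<beta>)
    then have "(exp (-\<beta>) ^ k * g \<beta>) powr (- ln z / \<beta>) = exp (- ln z / \<beta> * ln (exp (-\<beta>) ^ k * g \<beta>))"
      by (simp add: powr_def)
    also have "ln (exp (-\<beta>) ^ k * g \<beta>) = - real k * \<beta> + ln (g \<beta>)"
      using elim by (simp add: ln_mult ln_realpow)
    also have "- ln z / \<beta> * (- real k * \<beta> + ln (g \<beta>)) = real k * ln z - ln z * (ln (g \<beta>) / \<beta>)"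
      using elim by (simp add: field_simps)
    finally show ?case ..
  qed
  moreover have "((\<lambda>\<beta>. ln (g \<beta>) / \<beta>) \<longlongrightarrow> 0) at_top"
    using assms by (intro tendsto_divide_0[OF tendsto_ln] filterlim_at_top_imp_at_infinity filterlim_ident) auto
  then have "((\<lambda>\<beta>. exp (real k * ln z - ln z * (ln (g \<beta>) / \<beta>)))
               \<longlongrightarrow> exp (real k * ln z - ln z * 0)) at_top"
    by (intro tendsto_intros)
  ultimately show ?thesis
    using assms(1) by (simp add: exp_of_nat_mult Lim_transform_eventually)
qed

lemma tendsto_X1_powr:
  fixes z :: real
  assumes "0 < z" "r ` {1..d} \<subseteq> {-1, 0, 1}"
  shows "((\<lambda>\<beta>. X1 d \<beta> r powr (- ln z / \<beta>)) \<longlongrightarrow> z ^ min (up_steps d r) (down_steps d r)) at_top"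
proof -
  define k where "k = min (up_steps d r) (down_steps d r)"
  define g where "g \<beta> = ((1 + exp (-\<beta>)) / 2) ^ zero_steps d r *
    (exp (-\<beta>) ^ (up_steps d r - k) + exp (-\<beta>) ^ (down_steps d r - k))" for \<beta> :: real
  have X1: "X1 d \<beta> r = exp (-\<beta>) ^ k * g \<beta>" for \<beta>
  proof -
    have "exp (-\<beta>) ^ up_steps d r + exp (-\<beta>) ^ down_steps d r =
          exp (-\<beta>) ^ k * (exp (-\<beta>) ^ (up_steps d r - k) + exp (-\<beta>) ^ (down_steps d r - k))"
      unfolding k_def by (rule power_add_power_eq_power_min_mult)
    then show ?thesis
      unfolding X1_eq[OF assms(2)] g_def by (simp only: mult.left_commute)
  qed
  have "((\<lambda>\<beta>. exp (-\<beta>)) \<longlongrightarrow> (0::real)) at_top"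
    by (rule filterlim_compose[OF exp_at_bot filterlim_uminus_at_bot_at_top])
  then have "(g \<longlongrightarrow> ((1 + 0) / 2) ^ zero_steps d r * (0 ^ (up_steps d r - k) + 0 ^ (down_steps d r - k))) at_top"
    unfolding g_def by (intro tendsto_intros) auto
  moreover have "0 < ((1 + 0) / 2) ^ zero_steps d r * (0 ^ (up_steps d r - k) + (0::real) ^ (down_steps d r - k))"
    unfolding k_def by (cases "up_steps d r \<le> down_steps d r") (simp_all add: power_0_left)
  ultimately show ?thesis
    unfolding X1 k_def[symmetric] by (rule tendsto_exp_neg_power_mult_powr[OF assms(1)])
qed

theorem lemma6p2:
  fixes d :: nat and \<alpha> z :: real
  assumes "d \<ge> 3" and "0 < \<alpha>" and "\<alpha> < 1/2" and "0 < z" and "z < 1"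
  shows "((\<lambda>\<beta>. ln (measure_pmf.expectation (Pi_pmf {1..d} 0 (\<lambda>_. r_dist \<alpha>))
                  (\<lambda>r. X1 d \<beta> r powr (- ln z / \<beta>))))
          \<longlongrightarrow> ln (scalar_prod (zeta_vec d) ((A_mat d \<alpha> z ^\<^sub>m d) *\<^sub>v xi_vec d z))) at_top"
proof -
  have \<alpha>: "0 \<le> \<alpha>" "\<alpha> \<le> 1/2" using assms by auto
  let ?E = "measure_pmf.expectation (r_pmf \<alpha> d)"
  have "finite (set_pmf (r_pmf \<alpha> d))"
    by (intro finite_set_Pi_pmf finite_set_pmf_r_dist \<alpha> finite_atLeastAtMost)
  then have lim: "((\<lambda>\<beta>. ?E (\<lambda>r. X1 d \<beta> r powr (- ln z / \<beta>))) \<longlongrightarrow>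
                  ?E (\<lambda>r. z ^ min (up_steps d r) (down_steps d r))) at_top"
    by (rule tendsto_expectation_finite_pmf) (rule tendsto_X1_powr[OF assms(4) r_pmf_image[OF \<alpha>]])
  have "z ^ d \<le> z ^ min (up_steps d r) (down_steps d r)" for r
    using up_steps_add_down_steps_le[of d r] assms(4,5) by (intro power_decreasing) auto
  then have "z ^ d \<le> ?E (\<lambda>r. z ^ min (up_steps d r) (down_steps d r))"
    by (intro measure_pmf.integral_ge_const integrable_Pi_pmf_r_dist \<alpha> finite_atLeastAtMost AE_I2)
  then have "?E (\<lambda>r. z ^ min (up_steps d r) (down_steps d r)) \<noteq> 0"
    using zero_less_power[OF assms(4), of d] by linarith
  then show ?thesis
    unfolding zeta_vec_scalar_prod_A_mat_pow_xi_vec[OF \<alpha> assms(4)] by (rule tendsto_ln[OF lim])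
qed

end
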